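(* For every cartesian cubical set $X$ and every $n\ge 0$, \[ (X_{\mathrm{I}})_n\ \cong\ X_n\times X_{n-1}^{\binom{n}{n-1}}\times\dots\times X_1^{\binom{n}{1}}\times X_0, \] where $X_k^{m}$ denotes the $m$-fold product of the set $X_k$, and $X_{\mathrm{I}}$ is the value at $X$ of the right adjoint to the path object functor $Y\mapsto Y^{\mathrm{I}}$.
   Context: Let $\mathbb{B}$ be the category of finite sets $[n]=\{\bot,x_1,\dots,x_n,\top\}$ ($n\ge0$, $\bot\ne\top$) and functions preserving $\bot,\top$; the cartesian cube category is $\mathbb{C}_\times=\mathbb{B}^{op}$, and cartesian cubical sets are presheaves on $\mathbb{C}_\times$. For a cubical set $X$, $X_k=X([k])$. $\mathrm{I}$ is the representable presheaf on $[1]$ and $Y^{\mathrm{I}}$ is the exponential; the functor $Y\mapsto Y^{\mathrm{I}}$ has a right adjoint, whose value at $X$ is written $X_{\mathrm{I}}$. *)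

theory Defs
  imports Main
begin

text \<open>
  The category B: objects [n] = {bot, x_1, ..., x_n, top}, encoded as {0..Suc n}
  with 0 = bot, i = x_i (1 \<le> i \<le> n), Suc n = top.  A morphism [m] -> [n] is a
  function nat => nat preserving bot and top, mapping {0..Suc m} into {0..Suc n},
  and equal to 0 outside {0..Suc m} (so that morphisms are unique representatives).
\<close>

definition bmor :: "nat \<Rightarrow> nat \<Rightarrow> (nat \<Rightarrow> nat) \<Rightarrow> bool" where
  "bmor m n f \<longleftrightarrow> f 0 = 0 \<and> f (Suc m) = Suc n \<and> (\<forall>i\<le>Suc m. f i \<le> Suc n)
      \<and> (\<forall>i>Suc m. f i = 0)"

definition bid :: "nat \<Rightarrow> nat \<Rightarrow> nat" where
  "bid n = (\<lambda>i. if i \<le> Suc n then i else 0)"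

text \<open>
  A cartesian cubical set (presheaf on C = B^op) is a covariant functor B -> Set:
  a family of carriers X_n (fst X n) together with actions
  snd X m n f : X_m -> X_n for every f : [m] -> [n] in B.
\<close>

type_synonym 'a cset = "(nat \<Rightarrow> 'a set) \<times> (nat \<Rightarrow> nat \<Rightarrow> (nat \<Rightarrow> nat) \<Rightarrow> 'a \<Rightarrow> 'a)"

definition is_cset :: "'a cset \<Rightarrow> bool" where
  "is_cset X \<longleftrightarrow>
     (\<forall>m n f x. bmor m n f \<and> x \<in> fst X m \<longrightarrow> snd X m n f x \<in> fst X n) \<and>
     (\<forall>n x. x \<in> fst X n \<longrightarrow> snd X n n (bid n) x = x) \<and>
     (\<forall>l m n f g x. bmor l m f \<and> bmor m n g \<and> x \<in> fst X l \<longrightarrow>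
        snd X l n (g \<circ> f) x = snd X m n g (snd X l m f x))"

definition cnat :: "'a cset \<Rightarrow> 'b cset \<Rightarrow> (nat \<Rightarrow> 'a \<Rightarrow> 'b) set" where
  "cnat X Y = {\<eta>. (\<forall>n x. x \<in> fst X n \<longrightarrow> \<eta> n x \<in> fst Y n) \<and>
                   (\<forall>n x. x \<notin> fst X n \<longrightarrow> \<eta> n x = undefined) \<and>
                   (\<forall>m n f x. bmor m n f \<and> x \<in> fst X m \<longrightarrow>
                        \<eta> n (snd X m n f x) = snd Y m n f (\<eta> m x))}"

text \<open>Representable presheaf y[n]: y[n]_m = Hom_C([m],[n]) = Hom_B([n],[m]).\<close>

definition yon :: "nat \<Rightarrow> (nat \<Rightarrow> nat) cset" where
  "yon n = (\<lambda>m. {f. bmor n m f}, \<lambda>m m' g f. g \<circ> f)"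

definition interval :: "(nat \<Rightarrow> nat) cset" where
  "interval = yon 1"

definition cprod :: "'a cset \<Rightarrow> 'b cset \<Rightarrow> ('a \<times> 'b) cset" where
  "cprod X Y = (\<lambda>m. fst X m \<times> fst Y m,
                \<lambda>m n f p. (snd X m n f (fst p), snd Y m n f (snd p)))"

text \<open>Exponential Y^I: (Y^I)_m = Hom(y[m] \<times> I, Y); a B-map g : [m] -> [m'] acts by
  precomposition with y(g) \<times> id : y[m'] \<times> I -> y[m] \<times> I.\<close>

definition cexp :: "'b cset \<Rightarrow> (nat \<Rightarrow> ((nat \<Rightarrow> nat) \<times> (nat \<Rightarrow> nat)) \<Rightarrow> 'b) cset" where
  "cexp Y = (\<lambda>m. cnat (cprod (yon m) interval) Y,
             \<lambda>m m' g \<eta>. (\<lambda>k p. if p \<in> fst (cprod (yon m') interval) k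
                               then \<eta> k (fst p \<circ> g, snd p) else undefined))"

text \<open>
  The right adjoint X_I of Y |-> Y^I, given (as forced by the Yoneda lemma) by
  (X_I)_n = Hom(y[n]^I, X); a B-map g : [n] -> [n'] acts by precomposition with
  (y g)^I : y[n']^I -> y[n]^I, where (y g)^I postcomposes with y g : y[n'] -> y[n].
\<close>

definition path_radj :: "'a cset \<Rightarrow>
    (nat \<Rightarrow> (nat \<Rightarrow> ((nat \<Rightarrow> nat) \<times> (nat \<Rightarrow> nat)) \<Rightarrow> (nat \<Rightarrow> nat)) \<Rightarrow> 'a) cset" where
  "path_radj X = (\<lambda>n. cnat (cexp (yon n)) X,
     \<lambda>n n' g \<theta>. (\<lambda>k \<zeta>. if \<zeta> \<in> fst (cexp (yon n')) k
        then \<theta> k (\<lambda>j p. if p \<in> fst (cprod (yon k) interval) j then \<zeta> j p \<circ> g else undefined)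
        else undefined))"

text \<open>The set X_n \<times> X_{n-1}^(n choose n-1) \<times> ... \<times> X_1^(n choose 1) \<times> X_0, encoded as
  families f k j \<in> X_k for k \<le> n, j < n choose k (undefined elsewhere).\<close>

definition binom_prod :: "'a cset \<Rightarrow> nat \<Rightarrow> (nat \<Rightarrow> nat \<Rightarrow> 'a) set" where
  "binom_prod X n = {f. (\<forall>k\<le>n. \<forall>j<n choose k. f k j \<in> fst X k) \<and>
                        (\<forall>k j. (n < k \<or> n choose k \<le> j) \<longrightarrow> f k j = undefined)}"

end

theory Submission
  imports Defs "HOL-Library.FuncSet"
begin

text \<open>
  Since y[m] \<times> I \<cong> y[m+1], an m-cube of the path object y[n]^I is a map F : [n] \<rightarrow> [m+1] of B.
  Such an F factors uniquely as (g + id) \<circ> E_C, where C \<subseteq> {1..n} is the set of coordinates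
  not sent to the path coordinate, E_C : [n] \<rightarrow> [card C + 1] renumbers them, and
  g : [card C] \<rightarrow> [m].  Hence y[n]^I is the coproduct of the representables y[card C], and by
  Yoneda (X_I)_n = Hom(y[n]^I, X) \<cong> \<Prod>_C X_(card C); there are n choose k subsets C of size k.
\<close>

lemma bmor_comp: "bmor l m f \<Longrightarrow> bmor m n g \<Longrightarrow> bmor l n (g \<circ> f)"
  unfolding bmor_def by auto

lemma bmor_bid: "bmor n n (bid n)"
  unfolding bmor_def bid_def by auto

lemma bmor_zero: "bmor m n f \<Longrightarrow> f 0 = 0"
  unfolding bmor_def by simp

lemma bmor_le: "bmor m n f \<Longrightarrow> f i \<le> Suc n"
  unfolding bmor_def by (cases "i \<le> Suc m") auto

lemma bid_comp: "bmor m n f \<Longrightarrow> bid n \<circ> f = f"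
  using bmor_le unfolding bid_def by (auto simp: fun_eq_iff)

lemma comp_bid: "bmor m n f \<Longrightarrow> f \<circ> bid m = f"
  unfolding bmor_def bid_def by (auto simp: fun_eq_iff)

lemma bmor_eqI:
  assumes "bmor m n f" "bmor m n g" "\<And>i. 1 \<le> i \<Longrightarrow> i \<le> m \<Longrightarrow> f i = g i"
  shows "f = g"
proof
  fix i
  show "f i = g i"
  proof (cases "1 \<le> i \<and> i \<le> m")
    case False
    then consider "i = 0" | "i = Suc m" | "Suc m < i" by linarith
    then show ?thesis using assms(1,2) unfolding bmor_def by cases auto
  qed (use assms(3) in auto)
qed

lemma yon_carrier: "fst (yon n) k = {f. bmor n k f}"
  by (simp add: yon_def)

lemma yon_action: "snd (yon n) k k' h f = h \<circ> f"
  by (simp add: yon_def)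

lemma yon_interval_carrier: "fst (cprod (yon m) interval) k = {a. bmor m k a} \<times> {b. bmor 1 k b}"
  by (simp add: cprod_def yon_def interval_def)

lemma yon_interval_action: "snd (cprod (yon m) interval) k k' h p = (h \<circ> fst p, h \<circ> snd p)"
  by (simp add: cprod_def yon_def interval_def)

lemma is_cset_cexp: "is_cset (cexp Y)"
  unfolding is_cset_def
proof (intro conjI allI impI)
  fix m m' g \<eta> assume "bmor m m' g \<and> \<eta> \<in> fst (cexp Y) m"
  then have g: "bmor m m' g" and \<eta>: "\<eta> \<in> cnat (cprod (yon m) interval) Y"
    by (simp_all add: cexp_def)
  show "snd (cexp Y) m m' g \<eta> \<in> fst (cexp Y) m'"
    using \<eta> bmor_comp[OF g] unfolding cexp_def cnat_def
    by (auto simp: yon_interval_carrier yon_interval_action comp_assoc bmor_comp)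
next
  fix m \<eta> assume "\<eta> \<in> fst (cexp Y) m"
  then show "snd (cexp Y) m m (bid m) \<eta> = \<eta>"
    unfolding cexp_def cnat_def by (auto simp: fun_eq_iff yon_interval_carrier comp_bid)
next
  fix l m m' f g \<eta> assume "bmor l m f \<and> bmor m m' g \<and> \<eta> \<in> fst (cexp Y) l"
  then show "snd (cexp Y) l m' (g \<circ> f) \<eta> = snd (cexp Y) m m' g (snd (cexp Y) l m f \<eta>)"
    unfolding cexp_def by (auto simp: fun_eq_iff yon_interval_carrier bmor_comp comp_assoc)
qed

section \<open>Free cubical sets\<close>

text \<open>P is the coproduct of the representables y[d i], i \<in> I, with Yoneda elements e i.\<close>

definition cset_free_on :: "'b cset \<Rightarrow> 'i set \<Rightarrow> ('i \<Rightarrow> nat) \<Rightarrow> ('i \<Rightarrow> 'b) \<Rightarrow> bool" where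
  "cset_free_on P I d e \<longleftrightarrow>
     (\<forall>i\<in>I. e i \<in> fst P (d i)) \<and>
     (\<forall>m p. p \<in> fst P m \<longrightarrow> (\<exists>i\<in>I. \<exists>g. bmor (d i) m g \<and> p = snd P (d i) m g (e i))) \<and>
     (\<forall>m i g i' g'. i \<in> I \<and> i' \<in> I \<and> bmor (d i) m g \<and> bmor (d i') m g' \<and>
        snd P (d i) m g (e i) = snd P (d i') m g' (e i') \<longrightarrow> i = i' \<and> g = g')"

lemma cset_free_onI:
  assumes "\<And>i. i \<in> I \<Longrightarrow> e i \<in> fst P (d i)"
    and "\<And>m p. p \<in> fst P m \<Longrightarrow> \<exists>i\<in>I. \<exists>g. bmor (d i) m g \<and> p = snd P (d i) m g (e i)"
    and "\<And>m i g i' g'. \<lbrakk>i \<in> I; i' \<in> I; bmor (d i) m g; bmor (d i') m g';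
          snd P (d i) m g (e i) = snd P (d i') m g' (e i')\<rbrakk> \<Longrightarrow> i = i' \<and> g = g'"
  shows "cset_free_on P I d e"
  using assms unfolding cset_free_on_def by blast

lemma cset_free_onD:
  assumes "cset_free_on P I d e"
  shows "i \<in> I \<Longrightarrow> e i \<in> fst P (d i)"
    and "p \<in> fst P m \<Longrightarrow> \<exists>i\<in>I. \<exists>g. bmor (d i) m g \<and> p = snd P (d i) m g (e i)"
    and "\<lbrakk>i \<in> I; i' \<in> I; bmor (d i) m g; bmor (d i') m g';
          snd P (d i) m g (e i) = snd P (d i') m g' (e i')\<rbrakk> \<Longrightarrow> i = i' \<and> g = g'"
  using assms unfolding cset_free_on_def by (meson, meson, metis)

lemma cnat_on_generator:
  assumes "\<theta> \<in> cnat P X" "cset_free_on P I d e" "i \<in> I" "bmor (d i) m g"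
  shows "\<theta> m (snd P (d i) m g (e i)) = snd X (d i) m g (\<theta> (d i) (e i))"
proof -
  have "e i \<in> fst P (d i)" using cset_free_onD(1)[OF assms(2,3)] .
  then show ?thesis using assms(1,4) unfolding cnat_def by blast
qed

lemma cnat_eqI_on_generators:
  assumes free: "cset_free_on P I d e" and \<theta>: "\<theta> \<in> cnat P X" and \<theta>': "\<theta>' \<in> cnat P X"
    and eq: "\<And>i. i \<in> I \<Longrightarrow> \<theta> (d i) (e i) = \<theta>' (d i) (e i)"
  shows "\<theta> = \<theta>'"
proof (intro ext)
  fix m p
  show "\<theta> m p = \<theta>' m p"
  proof (cases "p \<in> fst P m")
    case True
    then obtain i g where "i \<in> I" "bmor (d i) m g" "p = snd P (d i) m g (e i)"
      using cset_free_onD(2)[OF free] by blast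
    then show ?thesis
      using cnat_on_generator[OF \<theta> free] cnat_on_generator[OF \<theta>' free] eq by simp
  next
    case False
    then show ?thesis using \<theta> \<theta>' unfolding cnat_def by simp
  qed
qed

lemma cnat_extend_generators:
  assumes P: "is_cset P" and X: "is_cset X" and free: "cset_free_on P I d e"
    and x: "x \<in> (\<Pi>\<^sub>E i\<in>I. fst X (d i))"
  obtains \<theta> where "\<theta> \<in> cnat P X" "\<And>i. i \<in> I \<Longrightarrow> \<theta> (d i) (e i) = x i"
proof -
  define decomp where "decomp m p =
    (THE (i, g). i \<in> I \<and> bmor (d i) m g \<and> p = snd P (d i) m g (e i))" for m p
  have decomp_eq: "decomp m (snd P (d i) m g (e i)) = (i, g)" if "i \<in> I" "bmor (d i) m g" for m i g
    unfolding decomp_def using that cset_free_onD(3)[OF free] by (intro the_equality) auto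
  define \<theta> where "\<theta> m p = (if p \<in> fst P m
    then (case decomp m p of (i, g) \<Rightarrow> snd X (d i) m g (x i)) else undefined)" for m p
  have P_act: "snd P (d i) m g (e i) \<in> fst P m" if "i \<in> I" "bmor (d i) m g" for i m g
    using P cset_free_onD(1)[OF free] that unfolding is_cset_def by blast
  have \<theta>_gen: "\<theta> m (snd P (d i) m g (e i)) = snd X (d i) m g (x i)"
    if "i \<in> I" "bmor (d i) m g" for i m g
    using that P_act decomp_eq unfolding \<theta>_def by simp
  have "\<theta> \<in> cnat P X"
    unfolding cnat_def
  proof (intro CollectI conjI allI impI)
    fix m p assume "p \<in> fst P m"
    then obtain i g where "i \<in> I" "bmor (d i) m g" "p = snd P (d i) m g (e i)"
      using cset_free_onD(2)[OF free] by blast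
    then show "\<theta> m p \<in> fst X m"
      using \<theta>_gen X PiE_mem[OF x] unfolding is_cset_def by auto
  next
    fix m p assume "p \<notin> fst P m"
    then show "\<theta> m p = undefined" unfolding \<theta>_def by simp
  next
    fix m m' f p assume f: "bmor m m' f \<and> p \<in> fst P m"
    then obtain i g where ig: "i \<in> I" "bmor (d i) m g" "p = snd P (d i) m g (e i)"
      using cset_free_onD(2)[OF free] by blast
    have "\<theta> m' (snd P m m' f p) = \<theta> m' (snd P (d i) m' (f \<circ> g) (e i))"
      using P cset_free_onD(1)[OF free] ig f unfolding is_cset_def by simp
    also have "\<dots> = snd X (d i) m' (f \<circ> g) (x i)"
      using \<theta>_gen ig f bmor_comp by blast
    also have "\<dots> = snd X m m' f (snd X (d i) m g (x i))"
      using X PiE_mem[OF x] ig f unfolding is_cset_def by blast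
    also have "\<dots> = snd X m m' f (\<theta> m p)"
      using \<theta>_gen ig by simp
    finally show "\<theta> m' (snd P m m' f p) = snd X m m' f (\<theta> m p)" .
  qed
  moreover have "\<theta> (d i) (e i) = x i" if "i \<in> I" for i
    using \<theta>_gen[OF that bmor_bid] P X cset_free_onD(1)[OF free] PiE_mem[OF x] that
    unfolding is_cset_def by metis
  ultimately show ?thesis using that by blast
qed

lemma cnat_free_bij_betw:
  assumes "is_cset P" "is_cset X" "cset_free_on P I d e"
  shows "bij_betw (\<lambda>\<theta>. \<lambda>i\<in>I. \<theta> (d i) (e i)) (cnat P X) (\<Pi>\<^sub>E i\<in>I. fst X (d i))"
proof (rule bij_betw_imageI)
  let ?res = "\<lambda>\<theta>. \<lambda>i\<in>I. \<theta> (d i) (e i)"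
  show "inj_on ?res (cnat P X)"
  proof (rule inj_onI)
    fix \<theta> \<theta>' assume \<theta>: "\<theta> \<in> cnat P X" "\<theta>' \<in> cnat P X" and eq: "?res \<theta> = ?res \<theta>'"
    have "\<theta> (d i) (e i) = \<theta>' (d i) (e i)" if "i \<in> I" for i
      using fun_cong[OF eq, of i] that by simp
    then show "\<theta> = \<theta>'" using cnat_eqI_on_generators[OF assms(3) \<theta>] by blast
  qed
  show "?res ` cnat P X = (\<Pi>\<^sub>E i\<in>I. fst X (d i))"
  proof (intro equalityI subsetI)
    fix x assume "x \<in> ?res ` cnat P X"
    then show "x \<in> (\<Pi>\<^sub>E i\<in>I. fst X (d i))"
      using cset_free_onD(1)[OF assms(3)] unfolding cnat_def by auto
  next
    fix x assume x: "x \<in> (\<Pi>\<^sub>E i\<in>I. fst X (d i))"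
    obtain \<theta> where \<theta>: "\<theta> \<in> cnat P X" "\<And>i. i \<in> I \<Longrightarrow> \<theta> (d i) (e i) = x i"
      using cnat_extend_generators[OF assms x] by blast
    have "?res \<theta> = x" using x \<theta>(2) by (auto simp: PiE_def extensional_def)
    then show "x \<in> ?res ` cnat P X" using \<theta>(1) by blast
  qed
qed

section \<open>The path object of a representable\<close>

text \<open>[m+1] is the coproduct of [m] and [1] in B, the coordinate Suc m coming from [1]; dually
  y[m] \<times> I \<cong> y[m+1], with generic pair (binl m, binr m).\<close>

definition bcopair :: "nat \<Rightarrow> (nat \<Rightarrow> nat) \<Rightarrow> (nat \<Rightarrow> nat) \<Rightarrow> nat \<Rightarrow> nat" where
  "bcopair m a b = (\<lambda>i. if i \<le> m then a i else if i = Suc m then b 1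
      else if i = Suc (Suc m) then a (Suc m) else 0)"

definition binl :: "nat \<Rightarrow> nat \<Rightarrow> nat" where
  "binl m = (\<lambda>i. if i \<le> m then i else if i = Suc m then Suc (Suc m) else 0)"

definition binr :: "nat \<Rightarrow> nat \<Rightarrow> nat" where
  "binr m = (\<lambda>i. if i = 0 then 0 else if i = 1 then Suc m else if i = 2 then Suc (Suc m) else 0)"

lemma bmor_binl: "bmor m (Suc m) (binl m)"
  unfolding bmor_def binl_def by auto

lemma binl_neq_Suc: "binl m x \<noteq> Suc m"
  by (simp add: binl_def)

lemma binl_inj: "x \<le> Suc m \<Longrightarrow> y \<le> Suc m \<Longrightarrow> binl m x = binl m y \<Longrightarrow> x = y"
  unfolding binl_def by (auto split: if_splits)

lemma bmor_binr: "bmor 1 (Suc m) (binr m)"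
  unfolding bmor_def binr_def by auto

lemma bmor_bcopair: "bmor m k a \<Longrightarrow> bmor 1 k b \<Longrightarrow> bmor (Suc m) k (bcopair m a b)"
  unfolding bmor_def bcopair_def by auto

lemma bcopair_comp_binl: "bmor m k a \<Longrightarrow> bcopair m a b \<circ> binl m = a"
  unfolding bmor_def bcopair_def binl_def by (auto simp: fun_eq_iff not_le)

lemma bcopair_comp_binr: "bmor m k a \<Longrightarrow> bmor 1 k b \<Longrightarrow> bcopair m a b \<circ> binr m = b"
  unfolding bmor_def bcopair_def binr_def by (auto simp: fun_eq_iff numeral_2_eq_2)

lemma comp_bcopair: "h 0 = 0 \<Longrightarrow> h \<circ> bcopair m a b = bcopair m (h \<circ> a) (h \<circ> b)"
  unfolding bcopair_def by (auto simp: fun_eq_iff)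

lemma bcopair_binl_binr: "bcopair m (binl m) (binr m) = bid (Suc m)"
  unfolding bcopair_def binl_def binr_def bid_def by (auto simp: fun_eq_iff)

definition nat_of_bmor ::
    "nat \<Rightarrow> (nat \<Rightarrow> nat) \<Rightarrow> nat \<Rightarrow> (nat \<Rightarrow> nat) \<times> (nat \<Rightarrow> nat) \<Rightarrow> nat \<Rightarrow> nat" where
  "nat_of_bmor m F = (\<lambda>k p. if p \<in> fst (cprod (yon m) interval) k
      then bcopair m (fst p) (snd p) \<circ> F else undefined)"

definition bmor_of_nat :: "nat \<Rightarrow> (nat \<Rightarrow> (nat \<Rightarrow> nat) \<times> (nat \<Rightarrow> nat) \<Rightarrow> nat \<Rightarrow> nat) \<Rightarrow> nat \<Rightarrow> nat" where
  "bmor_of_nat m \<eta> = \<eta> (Suc m) (binl m, binr m)"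

lemma binl_binr_in_yon_interval: "(binl m, binr m) \<in> fst (cprod (yon m) interval) (Suc m)"
  using bmor_binl bmor_binr by (simp add: yon_interval_carrier)

lemma nat_of_bmor_in_cnat:
  assumes "bmor n (Suc m) F"
  shows "nat_of_bmor m F \<in> cnat (cprod (yon m) interval) (yon n)"
  unfolding cnat_def
proof (intro CollectI conjI allI impI)
  fix k p assume "p \<in> fst (cprod (yon m) interval) k"
  then show "nat_of_bmor m F k p \<in> fst (yon n) k"
    using assms bmor_bcopair bmor_comp
    by (auto simp: nat_of_bmor_def yon_interval_carrier yon_carrier)
next
  fix k p assume "p \<notin> fst (cprod (yon m) interval) k"
  then show "nat_of_bmor m F k p = undefined" by (simp add: nat_of_bmor_def)
next
  fix k k' h p assume hp: "bmor k k' h \<and> p \<in> fst (cprod (yon m) interval) k"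
  then have "snd (cprod (yon m) interval) k k' h p \<in> fst (cprod (yon m) interval) k'"
    using bmor_comp by (auto simp: yon_interval_carrier yon_interval_action)
  then show "nat_of_bmor m F k' (snd (cprod (yon m) interval) k k' h p) =
      snd (yon n) k k' h (nat_of_bmor m F k p)"
    using hp comp_bcopair[of h] bmor_zero[of k k' h]
    by (simp add: nat_of_bmor_def yon_interval_action yon_action comp_assoc[symmetric])
qed

lemma bmor_of_nat_of_bmor: "bmor n (Suc m) F \<Longrightarrow> bmor_of_nat m (nat_of_bmor m F) = F"
  using binl_binr_in_yon_interval
  by (simp add: bmor_of_nat_def nat_of_bmor_def bcopair_binl_binr bid_comp)

lemma bmor_bmor_of_nat:
  assumes "\<eta> \<in> cnat (cprod (yon m) interval) (yon n)"
  shows "bmor n (Suc m) (bmor_of_nat m \<eta>)"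
  using assms binl_binr_in_yon_interval unfolding cnat_def bmor_of_nat_def yon_carrier by auto

lemma nat_of_bmor_of_nat:
  assumes \<eta>: "\<eta> \<in> cnat (cprod (yon m) interval) (yon n)"
  shows "nat_of_bmor m (bmor_of_nat m \<eta>) = \<eta>"
proof (rule ext, rule ext)
  fix k p
  show "nat_of_bmor m (bmor_of_nat m \<eta>) k p = \<eta> k p"
  proof (cases "p \<in> fst (cprod (yon m) interval) k")
    case True
    then obtain a b where p: "p = (a, b)" "bmor m k a" "bmor 1 k b"
      by (auto simp: yon_interval_carrier)
    have "\<eta> k (snd (cprod (yon m) interval) (Suc m) k (bcopair m a b) (binl m, binr m))
        = snd (yon n) (Suc m) k (bcopair m a b) (bmor_of_nat m \<eta>)"
      using \<eta> binl_binr_in_yon_interval bmor_bcopair[OF p(2,3)]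
      unfolding cnat_def bmor_of_nat_def by blast
    then show ?thesis
      using True p bcopair_comp_binl[OF p(2)] bcopair_comp_binr[OF p(2,3)]
      by (simp add: nat_of_bmor_def yon_interval_action yon_action)
  next
    case False
    moreover have "\<eta> k p = undefined" using \<eta> False unfolding cnat_def by blast
    ultimately show ?thesis by (simp add: nat_of_bmor_def)
  qed
qed

text \<open>The map g + id : [k+1] \<rightarrow> [m+1], i.e. g \<times> I.\<close>

definition succ_map :: "nat \<Rightarrow> nat \<Rightarrow> (nat \<Rightarrow> nat) \<Rightarrow> nat \<Rightarrow> nat" where
  "succ_map k m g = bcopair k (binl m \<circ> g) (binr m)"

lemma bmor_succ_map: "bmor k m g \<Longrightarrow> bmor (Suc k) (Suc m) (succ_map k m g)"
  unfolding succ_map_def using bmor_bcopair bmor_comp bmor_binl bmor_binr by blast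

lemma bcopair_comp_succ_map:
  assumes "bmor m k a" "bmor 1 k b"
  shows "bcopair m a b \<circ> succ_map d m g = bcopair d (a \<circ> g) b"
  using comp_bcopair[of "bcopair m a b"] bmor_zero[OF bmor_bcopair[OF assms]]
    bcopair_comp_binl[OF assms(1)] bcopair_comp_binr[OF assms]
  by (simp add: succ_map_def comp_assoc[symmetric])

lemma cexp_yon_action:
  assumes "bmor d m g"
  shows "snd (cexp (yon n)) d m g (nat_of_bmor d F) = nat_of_bmor m (succ_map d m g \<circ> F)"
proof (rule ext, rule ext)
  fix k p
  show "snd (cexp (yon n)) d m g (nat_of_bmor d F) k p = nat_of_bmor m (succ_map d m g \<circ> F) k p"
  proof (cases "p \<in> fst (cprod (yon m) interval) k")
    case True
    then obtain a b where p: "p = (a, b)" "bmor m k a" "bmor 1 k b"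
      by (auto simp: yon_interval_carrier)
    then have "(a \<circ> g, b) \<in> fst (cprod (yon d) interval) k"
      using assms bmor_comp by (simp add: yon_interval_carrier)
    then show ?thesis
      using True p bcopair_comp_succ_map[OF p(2,3)]
      by (simp add: cexp_def nat_of_bmor_def comp_assoc[symmetric])
  next
    case False
    then show ?thesis by (simp add: cexp_def nat_of_bmor_def)
  qed
qed

section \<open>Decomposition of the maps [n] \<rightarrow> [m+1]\<close>

definition subset_enum :: "nat set \<Rightarrow> nat \<Rightarrow> nat" where
  "subset_enum C = (SOME h. bij_betw h {1..card C} C)"

definition subset_rank :: "nat set \<Rightarrow> nat \<Rightarrow> nat" where
  "subset_rank C = the_inv_into {1..card C} (subset_enum C)"

lemma subset_enum_bij: "finite C \<Longrightarrow> bij_betw (subset_enum C) {1..card C} C"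
  unfolding subset_enum_def by (rule someI_ex[OF ex_bij_betw_nat_finite_1])

lemma subset_rank_bij: "finite C \<Longrightarrow> bij_betw (subset_rank C) C {1..card C}"
  unfolding subset_rank_def by (rule bij_betw_the_inv_into[OF subset_enum_bij])

lemma subset_enum_rank: "finite C \<Longrightarrow> i \<in> C \<Longrightarrow> subset_enum C (subset_rank C i) = i"
  unfolding subset_rank_def by (rule f_the_inv_into_f_bij_betw[OF subset_enum_bij])

lemma subset_rank_enum: "finite C \<Longrightarrow> x \<in> {1..card C} \<Longrightarrow> subset_rank C (subset_enum C x) = x"
  unfolding subset_rank_def using subset_enum_bij by (simp add: bij_betw_def the_inv_into_f_f)

lemma subset_rank_le: "C \<subseteq> {1..n} \<Longrightarrow> i \<in> C \<Longrightarrow> 1 \<le> subset_rank C i \<and> subset_rank C i \<le> card C"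
  using bij_betwE[OF subset_rank_bij[OF finite_subset]] by fastforce

text \<open>The generator of the summand y[card C] of y[n]^I: the coordinates in C are renumbered
  1, ..., card C, and all other coordinates are sent to the path coordinate Suc (card C).\<close>

definition path_gen :: "nat \<Rightarrow> nat set \<Rightarrow> nat \<Rightarrow> nat" where
  "path_gen n C = (\<lambda>i. if i = 0 then 0 else if i \<in> C then subset_rank C i
      else if i \<le> n then Suc (card C) else if i = Suc n then Suc (Suc (card C)) else 0)"

lemma bmor_path_gen: "C \<subseteq> {1..n} \<Longrightarrow> bmor n (Suc (card C)) (path_gen n C)"
  using subset_rank_le[of C n] unfolding bmor_def path_gen_def by fastforce

lemma path_gen_in:
  "C \<subseteq> {1..n} \<Longrightarrow> i \<in> C \<Longrightarrow> (succ_map (card C) m g \<circ> path_gen n C) i = binl m (g (subset_rank C i))"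
  using subset_rank_le[of C n i] by (auto simp: path_gen_def succ_map_def bcopair_def)

lemma path_gen_out:
  "1 \<le> i \<Longrightarrow> i \<le> n \<Longrightarrow> i \<notin> C \<Longrightarrow> (succ_map (card C) m g \<circ> path_gen n C) i = Suc m"
  by (simp add: path_gen_def succ_map_def bcopair_def binr_def)

lemma path_gen_support:
  assumes "C \<subseteq> {1..n}"
  shows "C = {i \<in> {1..n}. (succ_map (card C) m g \<circ> path_gen n C) i \<noteq> Suc m}"
  using assms path_gen_in[OF assms] path_gen_out[of _ n C m g] binl_neq_Suc by fastforce

lemma path_gen_decomp_unique:
  assumes C: "C \<subseteq> {1..n}" and C': "C' \<subseteq> {1..n}"
    and g: "bmor (card C) m g" and g': "bmor (card C') m g'"
    and eq: "succ_map (card C) m g \<circ> path_gen n C = succ_map (card C') m g' \<circ> path_gen n C'"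
  shows "C = C' \<and> g = g'"
proof
  show CC: "C = C'"
    using path_gen_support[OF C, of m g] path_gen_support[OF C', of m g'] eq by simp
  have fin: "finite C" using C finite_subset by blast
  show "g = g'"
  proof (rule bmor_eqI[OF g])
    show "bmor (card C) m g'" using g' CC by simp
    fix x assume x: "1 \<le> x" "x \<le> card C"
    then have i: "subset_enum C x \<in> C" "subset_rank C (subset_enum C x) = x"
      using bij_betwE[OF subset_enum_bij[OF fin]] subset_rank_enum[OF fin] by auto
    have "binl m (g x) = (succ_map (card C) m g \<circ> path_gen n C) (subset_enum C x)"
      using path_gen_in[OF C i(1)] i(2) by simp
    also have "\<dots> = (succ_map (card C') m g' \<circ> path_gen n C') (subset_enum C x)"
      using eq by simp
    also have "\<dots> = binl m (g' x)"
      using path_gen_in[OF C' i(1)[unfolded CC]] i(2) CC by simp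
    finally have "binl m (g x) = binl m (g' x)" .
    then show "g x = g' x" using binl_inj bmor_le[OF g] bmor_le[OF g'] by blast
  qed
qed

lemma path_gen_decomp:
  assumes F: "bmor n (Suc m) F"
  obtains C g where "C \<subseteq> {1..n}" "bmor (card C) m g" "F = succ_map (card C) m g \<circ> path_gen n C"
proof -
  define C where "C = {i \<in> {1..n}. F i \<noteq> Suc m}"
  have C: "C \<subseteq> {1..n}" and fin: "finite C" unfolding C_def by auto
  define g where "g x = (if x = 0 then 0
      else if x \<le> card C then (if F (subset_enum C x) = Suc (Suc m) then Suc m else F (subset_enum C x))
      else if x = Suc (card C) then Suc m else 0)" for x
  have enum: "subset_enum C x \<in> C" if "1 \<le> x" "x \<le> card C" for x
    using that bij_betwE[OF subset_enum_bij[OF fin]] by auto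
  have g: "bmor (card C) m g"
    using enum bmor_le[OF F] unfolding bmor_def g_def C_def by (fastforce simp: le_Suc_eq)
  have "F = succ_map (card C) m g \<circ> path_gen n C"
  proof (rule bmor_eqI[OF F])
    show "bmor n (Suc m) (succ_map (card C) m g \<circ> path_gen n C)"
      using bmor_comp[OF bmor_path_gen[OF C] bmor_succ_map[OF g]] .
    fix i assume i: "1 \<le> i" "i \<le> n"
    show "F i = (succ_map (card C) m g \<circ> path_gen n C) i"
    proof (cases "i \<in> C")
      case True
      then have "F i \<noteq> Suc m" "F i \<le> Suc (Suc m)" "subset_rank C i \<in> {1..card C}"
        using bmor_le[OF F] bij_betwE[OF subset_rank_bij[OF fin]] unfolding C_def by auto
      then show ?thesis
        using path_gen_in[OF C True] subset_enum_rank[OF fin True]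
        by (auto simp: g_def binl_def)
    next
      case False
      then show ?thesis using path_gen_out[OF i False] i unfolding C_def by auto
    qed
  qed
  then show ?thesis using that C g by blast
qed

lemma cexp_yon_free:
  "cset_free_on (cexp (yon n)) (Pow {1..n}) card (\<lambda>C. nat_of_bmor (card C) (path_gen n C))"
proof (rule cset_free_onI)
  fix C assume "C \<in> Pow {1..n}"
  then show "nat_of_bmor (card C) (path_gen n C) \<in> fst (cexp (yon n)) (card C)"
    using nat_of_bmor_in_cnat bmor_path_gen by (simp add: cexp_def)
next
  fix m p assume "p \<in> fst (cexp (yon n)) m"
  then have p: "p \<in> cnat (cprod (yon m) interval) (yon n)" by (simp add: cexp_def)
  obtain C g where C: "C \<subseteq> {1..n}" "bmor (card C) m g"
    and F: "bmor_of_nat m p = succ_map (card C) m g \<circ> path_gen n C"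
    using path_gen_decomp[OF bmor_bmor_of_nat[OF p]] by blast
  have "p = snd (cexp (yon n)) (card C) m g (nat_of_bmor (card C) (path_gen n C))"
    using nat_of_bmor_of_nat[OF p] F cexp_yon_action[OF C(2)] by simp
  then show "\<exists>C\<in>Pow {1..n}. \<exists>g. bmor (card C) m g \<and>
      p = snd (cexp (yon n)) (card C) m g (nat_of_bmor (card C) (path_gen n C))"
    using C by blast
next
  fix m C g C' g'
  assume "C \<in> Pow {1..n}" "C' \<in> Pow {1..n}" and g: "bmor (card C) m g" "bmor (card C') m g'"
    and "snd (cexp (yon n)) (card C) m g (nat_of_bmor (card C) (path_gen n C)) =
      snd (cexp (yon n)) (card C') m g' (nat_of_bmor (card C') (path_gen n C'))"
  then have C: "C \<subseteq> {1..n}" "C' \<subseteq> {1..n}"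
    and eq: "nat_of_bmor m (succ_map (card C) m g \<circ> path_gen n C) =
      nat_of_bmor m (succ_map (card C') m g' \<circ> path_gen n C')"
    by (simp_all add: cexp_yon_action)
  have "bmor n (Suc m) (succ_map (card C) m g \<circ> path_gen n C)"
    "bmor n (Suc m) (succ_map (card C') m g' \<circ> path_gen n C')"
    using bmor_comp[OF bmor_path_gen bmor_succ_map] C g by blast+
  then have "succ_map (card C) m g \<circ> path_gen n C = succ_map (card C') m g' \<circ> path_gen n C'"
    using arg_cong[OF eq, of "bmor_of_nat m"] by (simp add: bmor_of_nat_of_bmor)
  then show "C = C' \<and> g = g'" using path_gen_decomp_unique C g by blast
qed

section \<open>Counting the summands\<close>

definition ksubset_enum :: "nat \<Rightarrow> nat \<Rightarrow> nat \<Rightarrow> nat set" where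
  "ksubset_enum n k = (SOME h. bij_betw h {..<n choose k} {C. C \<subseteq> {1..n} \<and> card C = k})"

lemma ksubset_enum_bij: "bij_betw (ksubset_enum n k) {..<n choose k} {C. C \<subseteq> {1..n} \<and> card C = k}"
proof -
  have "card {C. C \<subseteq> {1..n} \<and> card C = k} = n choose k"
    using n_subsets[of "{1..n}" k] by simp
  then have "\<exists>h. bij_betw h {..<n choose k} {C. C \<subseteq> {1..n} \<and> card C = k}"
    using ex_bij_betw_nat_finite[of "{C. C \<subseteq> {1..n} \<and> card C = k}"] by (simp add: lessThan_atLeast0)
  then show ?thesis unfolding ksubset_enum_def by (rule someI_ex)
qed

lemma PiE_Pow_bij_binom_prod:
  "bij_betw (\<lambda>x k j. if k \<le> n \<and> j < n choose k then x (ksubset_enum n k j) else undefined)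
     (\<Pi>\<^sub>E C\<in>Pow {1..n}. fst X (card C)) (binom_prod X n)"
    (is "bij_betw ?\<phi> ?A ?B")
proof -
  define index where "index C = inv_into {..<n choose card C} (ksubset_enum n (card C)) C" for C
  have enum: "ksubset_enum n k j \<subseteq> {1..n}" "card (ksubset_enum n k j) = k"
    "index (ksubset_enum n k j) = j" if "j < n choose k" for k j
    using that bij_betwE[OF ksubset_enum_bij] bij_betw_inv_into_left[OF ksubset_enum_bij]
    unfolding index_def by auto
  have index: "card C \<le> n" "index C < n choose card C" "ksubset_enum n (card C) (index C) = C"
    if C: "C \<subseteq> {1..n}" for C
  proof -
    have im: "C \<in> ksubset_enum n (card C) ` {..<n choose card C}"
      using C bij_betw_imp_surj_on[OF ksubset_enum_bij] by blast
    show "index C < n choose card C" "ksubset_enum n (card C) (index C) = C"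
      unfolding index_def using inv_into_into[OF im] f_inv_into_f[OF im] by simp_all
    show "card C \<le> n" using card_mono[OF _ C] by simp
  qed
  define \<psi> where "\<psi> f = (\<lambda>C\<in>Pow {1..n}. f (card C) (index C))" for f :: "nat \<Rightarrow> nat \<Rightarrow> 'a"
  show ?thesis
  proof (rule bij_betw_byWitness[where f' = \<psi>])
    show "\<forall>x\<in>?A. \<psi> (?\<phi> x) = x"
    proof (intro ballI ext)
      fix x C assume x: "x \<in> ?A"
      show "\<psi> (?\<phi> x) C = x C"
        using index[of C] PiE_arb[OF x, of C] by (simp add: \<psi>_def)
    qed
    show "\<forall>f\<in>?B. ?\<phi> (\<psi> f) = f"
    proof (intro ballI ext)
      fix f k j assume f: "f \<in> ?B"
      show "?\<phi> (\<psi> f) k j = f k j"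
        using enum[of j k] f by (auto simp: \<psi>_def binom_prod_def not_le)
    qed
    show "?\<phi> ` ?A \<subseteq> ?B"
    proof (rule image_subsetI)
      fix x assume x: "x \<in> ?A"
      have "x (ksubset_enum n k j) \<in> fst X k" if "j < n choose k" for k j
        using PiE_mem[OF x] enum[OF that] by (metis Pow_iff)
      then show "?\<phi> x \<in> ?B" by (auto simp: binom_prod_def)
    qed
    show "\<psi> ` ?B \<subseteq> ?A"
    proof (rule image_subsetI)
      fix f assume "f \<in> ?B"
      then show "\<psi> f \<in> ?A"
        using index unfolding \<psi>_def restrict_PiE_iff binom_prod_def by simp
    qed
  qed
qed

theorem corollary2p7:
  fixes X :: "'a cset" and n :: nat
  assumes "is_cset X"
  shows "\<exists>\<phi>. bij_betw \<phi> (fst (path_radj X) n) (binom_prod X n)"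
proof -
  have "fst (path_radj X) n = cnat (cexp (yon n)) X"
    by (simp add: path_radj_def)
  then have "bij_betw (\<lambda>\<theta>. \<lambda>C\<in>Pow {1..n}. \<theta> (card C) (nat_of_bmor (card C) (path_gen n C)))
      (fst (path_radj X) n) (\<Pi>\<^sub>E C\<in>Pow {1..n}. fst X (card C))"
    using cnat_free_bij_betw[OF is_cset_cexp assms cexp_yon_free] by simp
  then show ?thesis
    using bij_betw_trans[OF _ PiE_Pow_bij_binom_prod] by blast
qed

end
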